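(* Let $s\in[0,1]$ and let $(L_n)_{n\ge1}$, $(U_n)_{n\ge1}$ be random variables on a common probability space; set $L_0:\equiv0$, $U_0:\equiv1$. Let $\mathcal{F}_0=\{\emptyset,\Omega\}$, $\mathcal{F}_n=\sigma\{L_n,U_n\}$ for $n\ge1$, and $\mathcal{F}_{k,\infty}=\sigma\{\mathcal{F}_k,\mathcal{F}_{k+1},\dots\}$. Assume that almost surely for every $n\ge1$: $L_n\le U_n$, $L_n\in[0,1]$, $U_n\in[0,1]$; that $l_n:=\mathbb{E}L_n$ is nondecreasing with $l_n\to s$ and $u_n:=\mathbb{E}U_n$ is nonincreasing with $u_n\to s$; and that for every $n\ge1$, almost surely, $$\mathbb{E}(L_{n-1}\mid\mathcal{F}_{n,\infty})=\mathbb{E}(L_{n-1}\mid\mathcal{F}_n)\le L_n,\qquad \mathbb{E}(U_{n-1}\mid\mathcal{F}_{n,\infty})=\mathbb{E}(U_{n-1}\mid\mathcal{F}_n)\ge U_n .$$ Put $L_n^*:=\mathbb{E}(L_{n-1}\mid\mathcal{F}_n)$, $U_n^*:=\mathbb{E}(U_{n-1}\mid\mathcal{F}_n)$ and assume $U_n^*>L_n^*$ a.s. for every $n\ge1$ (so the following recursion is well defined). Define $\tilde L_0:=0$, $\tilde U_0:=1$ and for $n\ge1$ $$\tilde L_n=\tilde L_{n-1}+\frac{L_n-L_n^*}{U_n^*-L_n^*}\,(\tilde U_{n-1}-\tilde L_{n-1}),\qquad \tilde U_n=\tilde U_{n-1}-\frac{U_n^*-U_n}{U_n^*-L_n^*}\,(\tilde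 U_{n-1}-\tilde L_{n-1}).$$ Let $G_0\sim U(0,1)$ be independent of $(L_n,U_n)_{n\ge1}$, let $N:=\inf\{n\ge1:\ G_0\le\tilde L_n\ \text{or}\ G_0>\tilde U_n\}$, and let $C_s:=1$ if $G_0\le\tilde L_N$ and $C_s:=0$ otherwise. Then $N<\infty$ a.s., $\mathbb{P}(C_s=1)=s$, and $\mathbb{P}(N>n)=u_n-l_n$ for every $n\ge1$.
   Context: This formalizes "Algorithm 4": $L_n$ is a reverse-time supermartingale and $U_n$ a reverse-time submartingale with respect to $(\mathcal{F}_{n,\infty})$, and monotone sequences $\tilde L_n,\tilde U_n$ are built online from them and then used as in the scheme "output $1$ if $G_0\le\tilde L_n$, $0$ if $G_0>\tilde U_n$, else continue". *)

theory Defs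
  imports "HOL-Probability.Probability"
begin

definition gen_F :: "'a measure \<Rightarrow> (nat \<Rightarrow> 'a \<Rightarrow> real) \<Rightarrow> (nat \<Rightarrow> 'a \<Rightarrow> real) \<Rightarrow> nat \<Rightarrow> 'a measure" where
  "gen_F M L U n = (if n = 0 then sigma (space M) {}
     else vimage_algebra (space M) (\<lambda>x. (L n x, U n x)) (borel :: (real \<times> real) measure))"

definition tail_F :: "'a measure \<Rightarrow> (nat \<Rightarrow> 'a \<Rightarrow> real) \<Rightarrow> (nat \<Rightarrow> 'a \<Rightarrow> real) \<Rightarrow> nat \<Rightarrow> 'a measure" where
  "tail_F M L U k = sigma (space M) (\<Union>m\<in>{k..}. sets (gen_F M L U m))"

definition Lstar where "Lstar M L U n = real_cond_exp M (gen_F M L U n) (L (n - 1))"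
definition Ustar where "Ustar M L U n = real_cond_exp M (gen_F M L U n) (U (n - 1))"

primrec tildeLU :: "'a measure \<Rightarrow> (nat \<Rightarrow> 'a \<Rightarrow> real) \<Rightarrow> (nat \<Rightarrow> 'a \<Rightarrow> real) \<Rightarrow> nat \<Rightarrow> 'a \<Rightarrow> real \<times> real" where
  "tildeLU M L U 0 x = (0, 1)"
| "tildeLU M L U (Suc n) x =
     (let a = fst (tildeLU M L U n x); b = snd (tildeLU M L U n x);
          ls = Lstar M L U (Suc n) x; us = Ustar M L U (Suc n) x
      in (a + (L (Suc n) x - ls) / (us - ls) * (b - a),
          b - (us - U (Suc n) x) / (us - ls) * (b - a)))"

definition tildeL where "tildeL M L U n x = fst (tildeLU M L U n x)"
definition tildeU where "tildeU M L U n x = snd (tildeLU M L U n x)"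

definition stopN :: "'a measure \<Rightarrow> (nat \<Rightarrow> 'a \<Rightarrow> real) \<Rightarrow> (nat \<Rightarrow> 'a \<Rightarrow> real) \<Rightarrow> ('a \<Rightarrow> real) \<Rightarrow> 'a \<Rightarrow> enat" where
  "stopN M L U G x =
     (if \<exists>n\<ge>1. G x \<le> tildeL M L U n x \<or> G x > tildeU M L U n x
      then enat (LEAST n. n \<ge> 1 \<and> (G x \<le> tildeL M L U n x \<or> G x > tildeU M L U n x))
      else \<infinity>)"

definition coinC :: "'a measure \<Rightarrow> (nat \<Rightarrow> 'a \<Rightarrow> real) \<Rightarrow> (nat \<Rightarrow> 'a \<Rightarrow> real) \<Rightarrow> ('a \<Rightarrow> real) \<Rightarrow> 'a \<Rightarrow> nat" where
  "coinC M L U G x =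
     (case stopN M L U G x of enat k \<Rightarrow> (if G x \<le> tildeL M L U k x then 1 else 0) | \<infinity> \<Rightarrow> 0)"

end

theory Submission
  imports Defs
begin

text \<open>The recursion for \<open>(tildeL n, tildeU n)\<close> moves the endpoints inwards by the fractions
\<open>r n = (L n - L\<^sup>* n) / (U\<^sup>* n - L\<^sup>* n)\<close> and \<open>q n = (U\<^sup>* n - U n) / (U\<^sup>* n - L\<^sup>* n)\<close>
of the current width. These are \<open>F n \<infinity>\<close>-measurable, nonnegative and \<open>r n + q n \<le> 1\<close>, so the
intervals are nested in \<open>[0, 1]\<close>. The update is affine with \<open>F n \<infinity>\<close>-measurable coefficients
and maps \<open>(L\<^sup>* n, U\<^sup>* n)\<close> to \<open>(L n, U n)\<close>; as \<open>L\<^sup>* n\<close> and \<open>U\<^sup>* n\<close> are the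
conditional expectations of \<open>L (n - 1)\<close> and \<open>U (n - 1)\<close> given \<open>F n \<infinity>\<close>, induction shows that
\<open>tildeL n\<close> and \<open>L n\<close> (likewise \<open>tildeU n\<close> and \<open>U n\<close>) have the same conditional expectation
given \<open>F n \<infinity>\<close>, hence the same mean. Since \<open>G\<close> is uniform and independent of \<open>F 1 \<infinity>\<close>,
\<open>P(G \<le> tildeL n) = l n\<close> and \<open>P(tildeL n < G \<le> tildeU n) = u n - l n\<close>. By nestedness,
\<open>N > n\<close> iff \<open>tildeL n < G \<le> tildeU n\<close>, and \<open>C = 1\<close> iff \<open>G \<le> tildeL n\<close> for some
\<open>n \<ge> 1\<close>; letting \<open>n \<rightarrow> \<infinity>\<close> gives the three claims.\<close>

lemma integrable_bounded_mult:
  fixes f g :: "'a \<Rightarrow> real"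
  assumes "integrable M f" "g \<in> borel_measurable M" "AE x in M. \<bar>g x\<bar> \<le> B"
  shows "integrable M (\<lambda>x. g x * f x)"
proof (rule Bochner_Integration.integrable_bound[where f="\<lambda>x. B * f x"])
  show "integrable M (\<lambda>x. B * f x)" using assms(1) by simp
  show "AE x in M. norm (g x * f x) \<le> norm (B * f x)"
    using assms(3) by eventually_elim (auto simp: abs_mult intro: mult_right_mono)
qed (use assms(1,2) in simp)

text \<open>Equal integrals against all bounded \<open>F\<close>-measurable weights; for integrable \<open>f\<close>
and \<open>g\<close> this says \<open>E(f | F) = E(g | F)\<close> a.e., without having to name a conditional expectation.\<close>

definition same_cond_exp :: "'a measure \<Rightarrow> 'a measure \<Rightarrow> ('a \<Rightarrow> real) \<Rightarrow> ('a \<Rightarrow> real) \<Rightarrow> bool" where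
  "same_cond_exp M F f g \<longleftrightarrow> (\<forall>W B. W \<in> borel_measurable F \<longrightarrow> (AE x in M. \<bar>W x\<bar> \<le> B) \<longrightarrow>
     (\<integral>x. W x * f x \<partial>M) = (\<integral>x. W x * g x \<partial>M))"

lemma same_cond_exp_refl: "same_cond_exp M F f f"
  by (simp add: same_cond_exp_def)

lemma same_cond_exp_trans:
  "same_cond_exp M F f g \<Longrightarrow> same_cond_exp M F g h \<Longrightarrow> same_cond_exp M F f h"
  by (simp add: same_cond_exp_def)

lemma same_cond_exp_subalgebra:
  assumes "same_cond_exp M F f g" "subalgebra F F'"
  shows "same_cond_exp M F' f g"
  using assms measurable_from_subalg unfolding same_cond_exp_def by blast

lemma same_cond_exp_AE_cong:
  assumes "same_cond_exp M F f g" "subalgebra M F"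
    and "g \<in> borel_measurable M" "h \<in> borel_measurable M" "AE x in M. g x = h x"
  shows "same_cond_exp M F f h"
  unfolding same_cond_exp_def
proof (intro allI impI)
  fix W :: "'a \<Rightarrow> real" and B :: real assume W: "W \<in> borel_measurable F" and "AE x in M. \<bar>W x\<bar> \<le> B"
  then have "(\<integral>x. W x * f x \<partial>M) = (\<integral>x. W x * g x \<partial>M)"
    using assms(1) unfolding same_cond_exp_def by blast
  also have "\<dots> = (\<integral>x. W x * h x \<partial>M)"
    using measurable_from_subalg[OF assms(2) W] assms(3-5) by (intro integral_cong_AE) auto
  finally show "(\<integral>x. W x * f x \<partial>M) = (\<integral>x. W x * h x \<partial>M)" .
qed

lemma (in sigma_finite_subalgebra) same_cond_exp_real_cond_exp:
  assumes "integrable M f"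
  shows "same_cond_exp M F f (real_cond_exp M F f)"
  unfolding same_cond_exp_def
proof (intro allI impI)
  fix W :: "'a \<Rightarrow> real" and B :: real assume W: "W \<in> borel_measurable F" and "AE x in M. \<bar>W x\<bar> \<le> B"
  then have "integrable M (\<lambda>x. W x * f x)"
    using assms measurable_from_subalg[OF subalg W] by (intro integrable_bounded_mult)
  then show "(\<integral>x. W x * f x \<partial>M) = (\<integral>x. W x * real_cond_exp M F f x \<partial>M)"
    using real_cond_exp_intg(2)[OF _ W] assms by simp
qed

lemma same_cond_exp_affine:
  fixes f g f' g' c :: "'a \<Rightarrow> real"
  assumes "subalgebra M F"
    and "integrable M f" "integrable M g" "integrable M f'" "integrable M g'"
    and c: "c \<in> borel_measurable F" "AE x in M. \<bar>c x\<bar> \<le> C"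
    and "same_cond_exp M F f f'" "same_cond_exp M F g g'"
  shows "same_cond_exp M F (\<lambda>x. f x + c x * (g x - f x)) (\<lambda>x. f' x + c x * (g' x - f' x))"
  unfolding same_cond_exp_def
proof (intro allI impI)
  fix W :: "'a \<Rightarrow> real" and B :: real assume W: "W \<in> borel_measurable F" and WB: "AE x in M. \<bar>W x\<bar> \<le> B"
  have Wc: "(\<lambda>x. W x * c x) \<in> borel_measurable F" using W c(1) by measurable
  have WcB: "AE x in M. \<bar>W x * c x\<bar> \<le> B * C"
    using WB c(2) by eventually_elim (auto simp: abs_mult intro: mult_mono)
  note int = integrable_bounded_mult[OF _ measurable_from_subalg[OF assms(1) W] WB]
    integrable_bounded_mult[OF _ measurable_from_subalg[OF assms(1) Wc] WcB]
  have eq: "(\<integral>x. W x * f x \<partial>M) = (\<integral>x. W x * f' x \<partial>M)"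
      "(\<integral>x. W x * c x * f x \<partial>M) = (\<integral>x. W x * c x * f' x \<partial>M)"
      "(\<integral>x. W x * c x * g x \<partial>M) = (\<integral>x. W x * c x * g' x \<partial>M)"
    using assms(8,9) W Wc WB WcB unfolding same_cond_exp_def by blast+
  have split: "(\<integral>x. W x * (h x + c x * (k x - h x)) \<partial>M)
      = (\<integral>x. W x * h x \<partial>M) + (\<integral>x. W x * c x * k x \<partial>M) - (\<integral>x. W x * c x * h x \<partial>M)"
    if "integrable M h" "integrable M k" for h k
    using int[OF that(1)] int[OF that(2)] by (simp add: algebra_simps)
  show "(\<integral>x. W x * (f x + c x * (g x - f x)) \<partial>M) = (\<integral>x. W x * (f' x + c x * (g' x - f' x)) \<partial>M)"
    using split[OF assms(2,3)] split[OF assms(4,5)] eq by simp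
qed

locale uniform_indep = prob_space M for M :: "'a measure" +
  fixes G :: "'a \<Rightarrow> real" and F :: "'a measure"
  assumes subalg: "subalgebra M F"
    and G_meas: "G \<in> borel_measurable M"
    and G_unif: "distr M borel G = uniform_measure lborel {0..1}"
    and G_indep: "indep_set {G -` A \<inter> space M | A. A \<in> sets (borel :: real measure)} (sets F)"
begin

lemma indep_var_G:
  assumes a: "a \<in> borel_measurable F"
  shows "indep_var borel G borel a"
  unfolding indep_var_def indep_vars_def2
proof
  show "\<forall>i\<in>UNIV. random_variable (case_bool borel borel i) (case_bool G a i)"
    using G_meas measurable_from_subalg[OF subalg a] by (simp split: bool.split)
  show "indep_sets (\<lambda>i. {case_bool G a i -` A \<inter> space M |A. A \<in> sets (case_bool borel borel i)}) UNIV"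
  proof (rule indep_sets_mono_sets[OF G_indep[unfolded indep_set_def]])
    fix i :: bool
    show "{case_bool G a i -` A \<inter> space M |A. A \<in> sets (case_bool borel borel i)}
        \<subseteq> case_bool {G -` A \<inter> space M |A. A \<in> sets borel} (sets F) i"
      using measurable_sets[OF a] subalg by (cases i) (auto simp: subalgebra_def)
  qed
qed

lemma prob_G_le:
  assumes a: "a \<in> borel_measurable F" and a01: "AE x in M. 0 \<le> a x \<and> a x \<le> 1"
  shows "prob {x \<in> space M. G x \<le> a x} = expectation a"
proof -
  let ?S = "{p :: real \<times> real. fst p \<le> snd p}"
  have aM: "a \<in> borel_measurable M" using measurable_from_subalg[OF subalg a] .
  interpret DG: prob_space "distr M borel G" by (rule prob_space_distr[OF G_meas])
  interpret Da: prob_space "distr M borel a" by (rule prob_space_distr[OF aM])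
  interpret PS: pair_sigma_finite "distr M borel G" "distr M borel a"
    by (simp add: pair_sigma_finite_def DG.sigma_finite_measure_axioms Da.sigma_finite_measure_axioms)
  have S: "?S \<in> sets (borel \<Otimes>\<^sub>M borel)"
    unfolding borel_prod by (intro borel_closed closed_Collect_le continuous_intros)
  then have S': "?S \<in> sets (distr M borel G \<Otimes>\<^sub>M distr M borel a)"
    by (simp cong: sets_pair_measure_cong)
  have Ga: "(\<lambda>x. (G x, a x)) \<in> M \<rightarrow>\<^sub>M borel \<Otimes>\<^sub>M borel"
    using G_meas aM by (rule measurable_Pair)
  have "emeasure M {x \<in> space M. G x \<le> a x} = emeasure (distr M (borel \<Otimes>\<^sub>M borel) (\<lambda>x. (G x, a x))) ?S"
    by (simp add: emeasure_distr[OF Ga S] vimage_def Int_def conj_commute)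
  also have "\<dots> = emeasure (distr M borel G \<Otimes>\<^sub>M distr M borel a) ?S"
    using indep_var_distribution_eq[THEN iffD1, OF indep_var_G[OF a]] by simp
  also have "\<dots> = (\<integral>\<^sup>+y. emeasure (distr M borel G) ((\<lambda>g. (g, y)) -` ?S) \<partial>distr M borel a)"
    by (rule PS.emeasure_pair_measure_alt2[OF S'])
  also have "\<dots> = (\<integral>\<^sup>+x. emeasure (distr M borel G) ((\<lambda>g. (g, a x)) -` ?S) \<partial>M)"
    by (rule nn_integral_distr[OF aM]) (use PS.measurable_emeasure_Pair2[OF S'] in simp)
  also have "\<dots> = (\<integral>\<^sup>+x. ennreal (a x) \<partial>M)"
  proof (rule nn_integral_cong_AE)
    show "AE x in M. emeasure (distr M borel G) ((\<lambda>g. (g, a x)) -` ?S) = ennreal (a x)"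
      using a01
    proof eventually_elim
      case (elim x)
      then have "{0..1} \<inter> {g. g \<le> a x} = {0..a x}" by auto
      then show ?case using elim by (simp add: G_unif vimage_def divide_ennreal_def)
    qed
  qed
  finally show ?thesis
    using a01 aM by (simp add: measure_def enn2real_nn_integral_eq_integral)
qed

lemma prob_G_between:
  assumes "a \<in> borel_measurable F" "b \<in> borel_measurable F"
    and ab: "AE x in M. 0 \<le> a x \<and> a x \<le> b x \<and> b x \<le> 1"
  shows "prob {x \<in> space M. a x < G x \<and> G x \<le> b x} = expectation b - expectation a"
proof -
  have [measurable]: "a \<in> borel_measurable M" "b \<in> borel_measurable M"
    using assms(1,2) by (simp_all add: measurable_from_subalg[OF subalg])
  note [measurable] = G_meas
  let ?A = "{x \<in> space M. G x \<le> a x}" and ?B = "{x \<in> space M. G x \<le> b x}"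
  have "prob {x \<in> space M. a x < G x \<and> G x \<le> b x} = prob (?B - ?A)"
    by (rule arg_cong[where f=prob]) auto
  also have "\<dots> = prob ?B - prob (?B \<inter> ?A)"
    by (rule finite_measure_Diff') measurable
  also have "prob (?B \<inter> ?A) = prob ?A"
  proof (rule measure_eq_AE)
    show "AE x in M. x \<in> ?B \<inter> ?A \<longleftrightarrow> x \<in> ?A" using ab by eventually_elim auto
  qed measurable
  moreover have "prob ?A = expectation a" "prob ?B = expectation b"
    using ab by (auto intro!: prob_G_le assms(1,2))
  ultimately show ?thesis by simp
qed

end

lemma (in finite_measure) sigma_finite_subalgebra_of_subalgebra:
  "subalgebra M F \<Longrightarrow> sigma_finite_subalgebra M F"
  by (intro finite_measure_subalgebra_is_sigma_finite finite_measure_subalgebra.intro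
      finite_measure_subalgebra_axioms.intro finite_measure_axioms)

lemma space_gen_F [simp]: "space (gen_F M L U n) = space M"
  by (simp add: gen_F_def)

lemma sets_tail_F: "sets (tail_F M L U k) = sigma_sets (space M) (\<Union>m\<in>{k..}. sets (gen_F M L U m))"
  unfolding tail_F_def by (rule sets_measure_of) (use sets.space_closed in fastforce)

lemma space_tail_F [simp]: "space (tail_F M L U k) = space M"
  unfolding tail_F_def by (rule space_measure_of) (use sets.space_closed in fastforce)

lemma subalgebra_tail_F_mono: "k \<le> k' \<Longrightarrow> subalgebra (tail_F M L U k) (tail_F M L U k')"
  unfolding subalgebra_def sets_tail_F by (auto intro!: sigma_sets_mono') (meson atLeast_iff le_trans)

lemma subalgebra_tail_F_gen_F: "k \<le> m \<Longrightarrow> subalgebra (tail_F M L U k) (gen_F M L U m)"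
  unfolding subalgebra_def sets_tail_F by auto

lemma measurable_gen_F:
  assumes "n \<ge> 1"
  shows "L n \<in> borel_measurable (gen_F M L U n)" "U n \<in> borel_measurable (gen_F M L U n)"
proof -
  have "(\<lambda>x. (L n x, U n x)) \<in> gen_F M L U n \<rightarrow>\<^sub>M borel"
    using assms by (simp add: gen_F_def measurable_vimage_algebra1)
  then show "L n \<in> borel_measurable (gen_F M L U n)" "U n \<in> borel_measurable (gen_F M L U n)"
    by (auto dest: measurable_fst'' measurable_snd'' simp: borel_prod[symmetric])
qed

lemma subalgebra_gen_F:
  assumes "\<And>n. L n \<in> borel_measurable M" "\<And>n. U n \<in> borel_measurable M"
  shows "subalgebra M (gen_F M L U n)"
proof -
  have "(\<lambda>x. (L n x, U n x)) \<in> M \<rightarrow>\<^sub>M borel"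
    using assms by (simp add: borel_prod[symmetric])
  then show ?thesis
    by (auto simp: subalgebra_def gen_F_def sets_vimage_algebra2 sigma_sets_empty_eq
        intro!: sets.sigma_sets_subset measurable_sets)
qed

lemma subalgebra_tail_F:
  assumes "\<And>n. L n \<in> borel_measurable M" "\<And>n. U n \<in> borel_measurable M"
  shows "subalgebra M (tail_F M L U k)"
  using subalgebra_gen_F[of L M U, OF assms] unfolding subalgebra_def sets_tail_F
  by (auto intro!: sets.sigma_sets_subset)

locale reverse_martingale_bounds = prob_space M for M :: "'a measure" +
  fixes L U :: "nat \<Rightarrow> 'a \<Rightarrow> real" and G :: "'a \<Rightarrow> real"
  assumes L_meas: "\<And>n. L n \<in> borel_measurable M"
    and U_meas: "\<And>n. U n \<in> borel_measurable M"
    and L0: "\<And>x. L 0 x = 0"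
    and U0: "\<And>x. U 0 x = 1"
    and bounds: "AE x in M. \<forall>n\<ge>1. L n x \<le> U n x \<and> L n x \<in> {0..1} \<and> U n x \<in> {0..1}"
    and L_super: "\<And>n. n \<ge> 1 \<Longrightarrow> AE x in M.
        real_cond_exp M (tail_F M L U n) (L (n - 1)) x = Lstar M L U n x \<and> Lstar M L U n x \<le> L n x"
    and U_sub: "\<And>n. n \<ge> 1 \<Longrightarrow> AE x in M.
        real_cond_exp M (tail_F M L U n) (U (n - 1)) x = Ustar M L U n x \<and> Ustar M L U n x \<ge> U n x"
    and gap: "\<And>n. n \<ge> 1 \<Longrightarrow> AE x in M. Ustar M L U n x > Lstar M L U n x"
    and G_meas: "G \<in> borel_measurable M"
    and G_unif: "distr M borel G = uniform_measure lborel {0..1}"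
    and G_indep: "indep_set {G -` A \<inter> space M | A. A \<in> sets (borel :: real measure)}
        (sets (tail_F M L U 1))"
begin

abbreviation "tL \<equiv> tildeL M L U"
abbreviation "tU \<equiv> tildeU M L U"
abbreviation "Ls \<equiv> Lstar M L U"
abbreviation "Us \<equiv> Ustar M L U"
abbreviation "TF \<equiv> tail_F M L U"

sublocale uniform_indep M G "TF 1"
  using subalgebra_tail_F[of L M U, OF L_meas U_meas] G_meas G_unif G_indep
  by unfold_locales

definition lower_step :: "nat \<Rightarrow> 'a \<Rightarrow> real" where
  "lower_step n x = (L n x - Ls n x) / (Us n x - Ls n x)"

definition upper_step :: "nat \<Rightarrow> 'a \<Rightarrow> real" where
  "upper_step n x = (Us n x - U n x) / (Us n x - Ls n x)"

lemma tildeLU_0 [simp]: "tL 0 = (\<lambda>_. 0)" "tU 0 = (\<lambda>_. 1)"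
  by (simp_all add: tildeL_def[abs_def] tildeU_def[abs_def])

lemma tildeL_Suc: "tL (Suc n) x = tL n x + lower_step (Suc n) x * (tU n x - tL n x)"
  by (simp add: tildeL_def tildeU_def Let_def lower_step_def)

lemma tildeU_Suc: "tU (Suc n) x = tU n x + upper_step (Suc n) x * (tL n x - tU n x)"
proof -
  have "tU (Suc n) x = tU n x - upper_step (Suc n) x * (tU n x - tL n x)"
    by (simp add: tildeL_def tildeU_def Let_def upper_step_def)
  then show ?thesis by (simp add: algebra_simps)
qed

definition regular :: "'a \<Rightarrow> bool" where
  "regular x \<longleftrightarrow> (\<forall>n\<ge>1. 0 \<le> L n x \<and> L n x \<le> U n x \<and> U n x \<le> 1 \<and>
     Ls n x \<le> L n x \<and> U n x \<le> Us n x \<and> Ls n x < Us n x)"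

lemma regular_L_U:
  assumes "regular x"
  shows "0 \<le> L n x \<and> L n x \<le> U n x \<and> U n x \<le> 1"
proof (cases "n = 0")
  case False
  with assms show ?thesis unfolding regular_def by simp
qed (simp add: L0 U0)

lemma AE_regular: "AE x in M. regular x"
proof -
  have "AE x in M. \<forall>n. n \<ge> 1 \<longrightarrow> Ls n x \<le> L n x \<and> U n x \<le> Us n x \<and> Ls n x < Us n x"
    unfolding AE_all_countable
  proof
    fix n show "AE x in M. n \<ge> 1 \<longrightarrow> Ls n x \<le> L n x \<and> U n x \<le> Us n x \<and> Ls n x < Us n x"
    proof (cases "n \<ge> 1")
      case True
      with L_super U_sub gap show ?thesis by auto
    qed simp
  qed
  with bounds show ?thesis unfolding regular_def by eventually_elim auto
qed

lemma step_bounds: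
  assumes "regular x"
  shows "0 \<le> lower_step (Suc n) x" "0 \<le> upper_step (Suc n) x"
    "lower_step (Suc n) x + upper_step (Suc n) x \<le> 1"
proof -
  let ?d = "Us (Suc n) x - Ls (Suc n) x"
  have "Ls (Suc n) x \<le> L (Suc n) x" "L (Suc n) x \<le> U (Suc n) x" "U (Suc n) x \<le> Us (Suc n) x" "0 < ?d"
    using assms unfolding regular_def by auto
  then show "0 \<le> lower_step (Suc n) x" "0 \<le> upper_step (Suc n) x"
    "lower_step (Suc n) x + upper_step (Suc n) x \<le> 1"
    by (auto simp: lower_step_def upper_step_def add_divide_distrib[symmetric])
qed

lemma tilde_bounds:
  assumes "regular x"
  shows "0 \<le> tL n x \<and> tL n x \<le> tU n x \<and> tU n x \<le> 1"
proof (induction n)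
  case (Suc n)
  let ?r = "lower_step (Suc n) x" and ?q = "upper_step (Suc n) x" and ?w = "tU n x - tL n x"
  have "0 \<le> ?r * ?w" "0 \<le> ?q * ?w" "(?r + ?q) * ?w \<le> ?w"
    using step_bounds[OF assms, of n] Suc by (auto intro: mult_left_le_one_le)
  then show ?case using Suc by (simp add: tildeL_Suc tildeU_Suc algebra_simps)
qed simp

lemma tilde_mono:
  assumes "regular x" "n \<le> m"
  shows "tL n x \<le> tL m x" "tU m x \<le> tU n x"
proof -
  have "tL n x \<le> tL (Suc n) x \<and> tU (Suc n) x \<le> tU n x" for n
    using step_bounds[OF assms(1), of n] tilde_bounds[OF assms(1), of n]
    by (simp add: tildeL_Suc tildeU_Suc mult_nonneg_nonpos)
  then show "tL n x \<le> tL m x" "tU m x \<le> tU n x"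
    using lift_Suc_mono_le[of "\<lambda>n. tL n x"] lift_Suc_antimono_le[of "\<lambda>n. tU n x"] assms(2)
    by blast+
qed

lemma subalgebra_TF: "subalgebra M (TF k)"
  using subalgebra_tail_F[of L M U, OF L_meas U_meas] .

lemma measurable_TF:
  assumes "1 \<le> m" "k \<le> m"
  shows "L m \<in> borel_measurable (TF k)" "U m \<in> borel_measurable (TF k)"
    "Ls m \<in> borel_measurable (TF k)" "Us m \<in> borel_measurable (TF k)"
    "lower_step m \<in> borel_measurable (TF k)" "upper_step m \<in> borel_measurable (TF k)"
proof -
  note sub = measurable_from_subalg[OF subalgebra_tail_F_gen_F[OF assms(2)]]
  show L: "L m \<in> borel_measurable (TF k)" and U: "U m \<in> borel_measurable (TF k)"
    using sub[OF measurable_gen_F(1)[OF assms(1)]] sub[OF measurable_gen_F(2)[OF assms(1)]] .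
  show Ls: "Ls m \<in> borel_measurable (TF k)" and Us: "Us m \<in> borel_measurable (TF k)"
    unfolding Lstar_def Ustar_def by (intro sub borel_measurable_cond_exp)+
  show "lower_step m \<in> borel_measurable (TF k)" "upper_step m \<in> borel_measurable (TF k)"
    unfolding lower_step_def[abs_def] upper_step_def[abs_def] using L U Ls Us by measurable
qed

lemma measurable_tilde_TF: "tL n \<in> borel_measurable (TF 1)" "tU n \<in> borel_measurable (TF 1)"
proof (induction n)
  case (Suc n)
  have "lower_step (Suc n) \<in> borel_measurable (TF 1)" "upper_step (Suc n) \<in> borel_measurable (TF 1)"
    using measurable_TF[of "Suc n" 1] by simp_all
  with Suc show "tL (Suc n) \<in> borel_measurable (TF 1)" "tU (Suc n) \<in> borel_measurable (TF 1)"
    unfolding tildeL_Suc[abs_def] tildeU_Suc[abs_def] by measurable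
qed simp_all

lemma measurable_tilde [measurable]: "tL n \<in> borel_measurable M" "tU n \<in> borel_measurable M"
  using measurable_from_subalg[OF subalgebra_TF measurable_tilde_TF(1)]
    measurable_from_subalg[OF subalgebra_TF measurable_tilde_TF(2)] by blast+

lemma integrable_if_regular_bounded:
  fixes f :: "'a \<Rightarrow> real"
  assumes "f \<in> borel_measurable M" "\<And>x. regular x \<Longrightarrow> 0 \<le> f x \<and> f x \<le> 1"
  shows "integrable M f"
proof (rule integrable_const_bound)
  show "AE x in M. norm (f x) \<le> 1" using AE_regular by eventually_elim (use assms(2) in force)
qed (rule assms(1))

lemma integrable_L_U: "integrable M (L n)" "integrable M (U n)"
  by (auto intro!: integrable_if_regular_bounded L_meas U_meas dest!: regular_L_U[of _ n])

lemma integrable_tilde: "integrable M (tL n)" "integrable M (tU n)"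
  by (auto intro!: integrable_if_regular_bounded measurable_tilde dest!: tilde_bounds[of _ n])

lemma same_cond_exp_Lstar_Ustar:
  assumes "n \<ge> 1"
  shows "same_cond_exp M (TF n) (L (n - 1)) (Ls n)" "same_cond_exp M (TF n) (U (n - 1)) (Us n)"
proof -
  interpret sigma_finite_subalgebra M "TF n"
    by (rule sigma_finite_subalgebra_of_subalgebra[OF subalgebra_TF])
  have Ls: "Ls n \<in> borel_measurable M" "Us n \<in> borel_measurable M"
    using measurable_TF(3,4)[OF assms order_refl] by (auto intro: measurable_from_subalg[OF subalg])
  show "same_cond_exp M (TF n) (L (n - 1)) (Ls n)"
    using L_super[OF assms]
    by (intro same_cond_exp_AE_cong[OF same_cond_exp_real_cond_exp[OF integrable_L_U(1)]
        subalg borel_measurable_cond_exp2 Ls(1)]) auto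
  show "same_cond_exp M (TF n) (U (n - 1)) (Us n)"
    using U_sub[OF assms]
    by (intro same_cond_exp_AE_cong[OF same_cond_exp_real_cond_exp[OF integrable_L_U(2)]
        subalg borel_measurable_cond_exp2 Ls(2)]) auto
qed

lemma integrable_Lstar_Ustar: "integrable M (Ls n)" "integrable M (Us n)"
proof -
  interpret sigma_finite_subalgebra M "gen_F M L U n"
    by (rule sigma_finite_subalgebra_of_subalgebra[OF subalgebra_gen_F[OF L_meas U_meas]])
  show "integrable M (Ls n)" "integrable M (Us n)"
    unfolding Lstar_def Ustar_def using integrable_L_U by auto
qed

lemma lower_step_eq:
  assumes "regular x"
  shows "Ls (Suc n) x + lower_step (Suc n) x * (Us (Suc n) x - Ls (Suc n) x) = L (Suc n) x"
proof -
  have "Ls (Suc n) x < Us (Suc n) x" using assms unfolding regular_def by auto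
  then show ?thesis by (simp add: lower_step_def field_simps)
qed

lemma upper_step_eq:
  assumes "regular x"
  shows "Us (Suc n) x + upper_step (Suc n) x * (Ls (Suc n) x - Us (Suc n) x) = U (Suc n) x"
proof -
  have "Ls (Suc n) x < Us (Suc n) x" using assms unfolding regular_def by auto
  then show ?thesis by (simp add: upper_step_def field_simps)
qed

lemma same_cond_exp_tilde:
  "same_cond_exp M (TF n) (tL n) (L n) \<and> same_cond_exp M (TF n) (tU n) (U n)"
proof (induction n)
  case 0
  have "L 0 = (\<lambda>_. 0)" "U 0 = (\<lambda>_. 1)" using L0 U0 by auto
  then show ?case by (simp add: same_cond_exp_refl)
next
  case (Suc n)
  let ?F = "TF (Suc n)"
  have "subalgebra (TF n) ?F" by (rule subalgebra_tail_F_mono) simp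
  then have tilde_star: "same_cond_exp M ?F (tL n) (Ls (Suc n))" "same_cond_exp M ?F (tU n) (Us (Suc n))"
    using Suc.IH same_cond_exp_Lstar_Ustar[of "Suc n"]
    by (auto intro: same_cond_exp_trans same_cond_exp_subalgebra)
  have step_abs: "AE x in M. \<bar>lower_step (Suc n) x\<bar> \<le> 1" "AE x in M. \<bar>upper_step (Suc n) x\<bar> \<le> 1"
    using AE_regular by (eventually_elim, use step_bounds[of _ n] in force)+
  have [measurable]: "lower_step (Suc n) \<in> borel_measurable M" "upper_step (Suc n) \<in> borel_measurable M"
    "Ls (Suc n) \<in> borel_measurable M" "Us (Suc n) \<in> borel_measurable M"
    using measurable_TF[of "Suc n" "Suc n"] by (auto intro: measurable_from_subalg[OF subalgebra_TF])
  note affine = same_cond_exp_affine[OF subalgebra_TF integrable_tilde(1,2) integrable_Lstar_Ustar(1,2)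
      measurable_TF(5)[of "Suc n"] step_abs(1) tilde_star]
    same_cond_exp_affine[OF subalgebra_TF integrable_tilde(2,1) integrable_Lstar_Ustar(2,1)
      measurable_TF(6)[of "Suc n"] step_abs(2) tilde_star(2,1)]
  show ?case
  proof
    show "same_cond_exp M ?F (tL (Suc n)) (L (Suc n))"
      unfolding tildeL_Suc[abs_def] using AE_regular lower_step_eq L_meas
      by (intro same_cond_exp_AE_cong[OF affine(1) subalgebra_TF]) auto
    show "same_cond_exp M ?F (tU (Suc n)) (U (Suc n))"
      unfolding tildeU_Suc[abs_def] using AE_regular upper_step_eq U_meas
      by (intro same_cond_exp_AE_cong[OF affine(2) subalgebra_TF]) auto
  qed
qed

lemma expectation_tilde: "expectation (tL n) = expectation (L n)" "expectation (tU n) = expectation (U n)"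
  using same_cond_exp_tilde[of n] unfolding same_cond_exp_def
  by (auto dest!: spec[of _ "\<lambda>_. 1"] spec[of _ 1])

lemma AE_tilde_bounds: "AE x in M. 0 \<le> tL n x \<and> tL n x \<le> tU n x \<and> tU n x \<le> 1"
  using AE_regular by eventually_elim (rule tilde_bounds)

lemma prob_le_tildeL: "prob {x \<in> space M. G x \<le> tL n x} = expectation (L n)"
proof -
  have "AE x in M. 0 \<le> tL n x \<and> tL n x \<le> 1" using AE_tilde_bounds[of n] by eventually_elim auto
  then show ?thesis using prob_G_le[OF measurable_tilde_TF(1)] expectation_tilde by simp
qed

lemma prob_between_tilde:
  "prob {x \<in> space M. tL n x < G x \<and> G x \<le> tU n x} = expectation (U n) - expectation (L n)"
  using prob_G_between[OF measurable_tilde_TF AE_tilde_bounds] expectation_tilde by simp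

lemma stopN_eq_enat_iff:
  "stopN M L U G x = enat K \<longleftrightarrow> (1 \<le> K \<and> (G x \<le> tL K x \<or> tU K x < G x)) \<and>
     (\<forall>k\<in>{1..<K}. tL k x < G x \<and> G x \<le> tU k x)"
  (is "_ \<longleftrightarrow> ?P K \<and> (\<forall>k\<in>{1..<K}. _)")
proof
  assume K: "stopN M L U G x = enat K"
  then have ex: "\<exists>k. ?P k" and K_Least: "K = (LEAST k. ?P k)"
    unfolding stopN_def by (auto split: if_splits)
  show "?P K \<and> (\<forall>k\<in>{1..<K}. tL k x < G x \<and> G x \<le> tU k x)"
    using LeastI_ex[OF ex] not_less_Least[of _ ?P] unfolding K_Least[symmetric]
    by (fastforce simp: not_le not_less)
next
  assume K: "?P K \<and> (\<forall>k\<in>{1..<K}. tL k x < G x \<and> G x \<le> tU k x)"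
  then have "(LEAST k. ?P k) = K"
    by (intro Least_equality) (auto simp: not_less[symmetric])
  with K show "stopN M L U G x = enat K" unfolding stopN_def by auto
qed

lemma stopN_eq_infinity_iff: "stopN M L U G x = \<infinity> \<longleftrightarrow> (\<forall>k\<ge>1. tL k x < G x \<and> G x \<le> tU k x)"
proof -
  have "stopN M L U G x = \<infinity> \<longleftrightarrow> \<not> (\<exists>k\<ge>1. G x \<le> tL k x \<or> tU k x < G x)"
    unfolding stopN_def by simp
  then show ?thesis by (meson not_le not_less)
qed

lemma enat_less_stopN_iff:
  "enat n < stopN M L U G x \<longleftrightarrow> (\<forall>k\<in>{1..n}. tL k x < G x \<and> G x \<le> tU k x)"
proof (cases "stopN M L U G x")
  case (enat K)
  then have K: "G x \<le> tL K x \<or> tU K x < G x" "\<forall>k\<in>{1..<K}. tL k x < G x \<and> G x \<le> tU k x"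
    unfolding stopN_eq_enat_iff by auto
  show ?thesis
  proof
    assume "enat n < stopN M L U G x"
    then show "\<forall>k\<in>{1..n}. tL k x < G x \<and> G x \<le> tU k x" using enat K(2) by auto
  next
    assume all: "\<forall>k\<in>{1..n}. tL k x < G x \<and> G x \<le> tU k x"
    have "1 \<le> K" using enat unfolding stopN_eq_enat_iff by auto
    with K(1) all have "\<not> K \<le> n" by (meson atLeastAtMost_iff not_le not_less)
    then show "enat n < stopN M L U G x" using enat by simp
  qed
next
  case infinity
  then show ?thesis using stopN_eq_infinity_iff[of x] by auto
qed

lemma sets_coinC_eq_1: "{x \<in> space M. coinC M L U G x = 1} \<in> sets M"
proof -
  note [measurable] = G_meas
  have "{x \<in> space M. coinC M L U G x = 1}
      = {x \<in> space M. \<exists>K. stopN M L U G x = enat K \<and> G x \<le> tL K x}"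
    unfolding coinC_def by (auto split: enat.splits)
  also have "\<dots> \<in> sets M" unfolding stopN_eq_enat_iff by measurable
  finally show ?thesis .
qed

lemma coinC_eq_1_iff:
  assumes "regular x"
  shows "coinC M L U G x = 1 \<longleftrightarrow> (\<exists>k. G x \<le> tL (Suc k) x)"
proof
  assume C: "coinC M L U G x = 1"
  obtain K where K: "stopN M L U G x = enat K"
    using C by (cases "stopN M L U G x") (simp_all add: coinC_def)
  then have "G x \<le> tL K x" using C by (simp add: coinC_def split: if_splits)
  moreover have "K = Suc (K - 1)" using K unfolding stopN_eq_enat_iff by simp
  ultimately show "\<exists>k. G x \<le> tL (Suc k) x" by metis
next
  assume "\<exists>k. G x \<le> tL (Suc k) x"
  then obtain k' where "G x \<le> tL (Suc k') x" ..
  then obtain k where k: "1 \<le> k" "G x \<le> tL k x" by (intro that[of "Suc k'"]) simp_all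
  then have "stopN M L U G x \<noteq> \<infinity>"
    unfolding stopN_eq_infinity_iff by (auto simp: not_less)
  then obtain K where K: "stopN M L U G x = enat K" by auto
  then have exit: "G x \<le> tL K x \<or> tU K x < G x" and inside: "\<forall>j\<in>{1..<K}. tL j x < G x"
    unfolding stopN_eq_enat_iff by auto
  have "K \<le> k"
  proof (rule ccontr)
    assume "\<not> K \<le> k"
    then have "tL k x < G x" using inside k(1) by simp
    then show False using k(2) by simp
  qed
  then have "tU k x \<le> tU K x" by (rule tilde_mono(2)[OF assms])
  moreover have "tL k x \<le> tU k x" using tilde_bounds[OF assms] by blast
  ultimately have "G x \<le> tL K x" using exit k(2) by linarith
  then show "coinC M L U G x = 1" unfolding coinC_def K by simp
qed

lemma all_inside_iff_last_inside:
  assumes "regular x" "1 \<le> n"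
  shows "(\<forall>k\<in>{1..n}. tL k x < G x \<and> G x \<le> tU k x) \<longleftrightarrow> tL n x < G x \<and> G x \<le> tU n x"
proof
  assume "tL n x < G x \<and> G x \<le> tU n x"
  moreover have "tL k x \<le> tL n x \<and> tU n x \<le> tU k x" if "k \<in> {1..n}" for k
    using that tilde_mono[OF assms(1), of k n] by simp
  ultimately show "\<forall>k\<in>{1..n}. tL k x < G x \<and> G x \<le> tU k x" by fastforce
qed (use assms(2) in auto)

lemma prob_stopN_gt:
  assumes "1 \<le> n"
  shows "prob {x \<in> space M. enat n < stopN M L U G x} = expectation (U n) - expectation (L n)"
proof -
  note [measurable] = G_meas
  have "prob {x \<in> space M. enat n < stopN M L U G x}
      = prob {x \<in> space M. \<forall>k\<in>{1..n}. tL k x < G x \<and> G x \<le> tU k x}"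
    by (simp add: enat_less_stopN_iff)
  also have "\<dots> = prob {x \<in> space M. tL n x < G x \<and> G x \<le> tU n x}"
  proof (rule measure_eq_AE)
    show "AE x in M. x \<in> {x \<in> space M. \<forall>k\<in>{1..n}. tL k x < G x \<and> G x \<le> tU k x}
        \<longleftrightarrow> x \<in> {x \<in> space M. tL n x < G x \<and> G x \<le> tU n x}"
      using AE_regular by eventually_elim (use all_inside_iff_last_inside[OF _ assms] in blast)
  qed measurable
  also have "\<dots> = expectation (U n) - expectation (L n)"
    by (rule prob_between_tilde)
  finally show ?thesis .
qed

lemma prob_coinC_eq_1:
  assumes "(\<lambda>n. expectation (L n)) \<longlonglongrightarrow> s"
  shows "prob {x \<in> space M. coinC M L U G x = 1} = s"
proof -
  note [measurable] = G_meas
  define A where "A i = {x \<in> space M. \<exists>k\<le>i. G x \<le> tL (Suc k) x}" for i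
  have "A i \<in> sets M" for i unfolding A_def by measurable
  moreover have "incseq A" unfolding A_def incseq_def by (auto intro: order_trans)
  ultimately have A: "range A \<subseteq> sets M" "incseq A" by auto
  have "prob (A i) = prob {x \<in> space M. G x \<le> tL (Suc i) x}" for i
  proof (rule measure_eq_AE)
    show "AE x in M. x \<in> A i \<longleftrightarrow> x \<in> {x \<in> space M. G x \<le> tL (Suc i) x}"
      using AE_regular unfolding A_def
    proof eventually_elim
      case (elim x)
      have "tL (Suc k) x \<le> tL (Suc i) x" if "k \<le> i" for k
        using tilde_mono(1)[OF elim] that by simp
      then show ?case by (auto intro: order_trans)
    qed
  qed (unfold A_def, measurable)
  then have "(\<lambda>i. prob (A i)) \<longlonglongrightarrow> s"
    using LIMSEQ_Suc[OF assms] by (simp add: prob_le_tildeL)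
  moreover have "(\<lambda>i. prob (A i)) \<longlonglongrightarrow> prob (\<Union>i. A i)"
    using A by (rule finite_Lim_measure_incseq)
  ultimately have "prob (\<Union>i. A i) = s" using LIMSEQ_unique by blast
  moreover have "prob {x \<in> space M. coinC M L U G x = 1} = prob (\<Union>i. A i)"
  proof (rule measure_eq_AE)
    show "AE x in M. x \<in> {x \<in> space M. coinC M L U G x = 1} \<longleftrightarrow> x \<in> (\<Union>i. A i)"
      using AE_regular unfolding A_def
    proof eventually_elim
      case (elim x)
      show ?case using coinC_eq_1_iff[OF elim] by auto
    qed
  qed (fact sets_coinC_eq_1, fact sets.countable_UN[OF A(1)])
  ultimately show ?thesis by simp
qed

lemma AE_stopN_finite:
  assumes "(\<lambda>n. expectation (U n) - expectation (L n)) \<longlonglongrightarrow> 0"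
  shows "AE x in M. stopN M L U G x < \<infinity>"
proof (rule AE_I')
  note [measurable] = G_meas
  let ?B = "{x \<in> space M. \<forall>k\<ge>1. tL k x < G x \<and> G x \<le> tU k x}"
  show "{x \<in> space M. \<not> stopN M L U G x < \<infinity>} \<subseteq> ?B"
  proof safe
    fix x and k :: nat assume "\<not> stopN M L U G x < \<infinity>" "1 \<le> k"
    then have "stopN M L U G x = \<infinity>" by (cases "stopN M L U G x") auto
    then show "tL k x < G x" "G x \<le> tU k x"
      using \<open>1 \<le> k\<close> unfolding stopN_eq_infinity_iff by blast+
  qed
  have B: "?B \<in> sets M" by measurable
  have "prob ?B \<le> expectation (U n) - expectation (L n)" if "1 \<le> n" for n
  proof -
    have "prob ?B \<le> prob {x \<in> space M. tL n x < G x \<and> G x \<le> tU n x}"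
    proof (rule finite_measure_mono)
      show "?B \<subseteq> {x \<in> space M. tL n x < G x \<and> G x \<le> tU n x}" using that by auto
    qed measurable
    then show ?thesis by (simp add: prob_between_tilde)
  qed
  then have "\<exists>N. \<forall>n\<ge>N. prob ?B \<le> expectation (U n) - expectation (L n)" by blast
  then have "prob ?B \<le> 0" by (rule LIMSEQ_le_const[OF assms])
  then show "?B \<in> null_sets M"
    using B by (simp add: null_sets_def emeasure_eq_measure measure_le_0_iff)
qed

end

theorem theorem1:
  fixes M :: "'a measure" and L U :: "nat \<Rightarrow> 'a \<Rightarrow> real" and G :: "'a \<Rightarrow> real" and s :: real
  assumes "prob_space M"
    and "s \<in> {0..1}"
    and L_meas: "\<And>n. L n \<in> borel_measurable M"
    and U_meas: "\<And>n. U n \<in> borel_measurable M"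
    and L0: "\<And>x. L 0 x = 0"
    and U0: "\<And>x. U 0 x = 1"
    and bounds: "AE x in M. \<forall>n\<ge>1. L n x \<le> U n x \<and> L n x \<in> {0..1} \<and> U n x \<in> {0..1}"
    and l_mono: "\<And>n. n \<ge> 1 \<Longrightarrow> prob_space.expectation M (L n) \<le> prob_space.expectation M (L (Suc n))"
    and l_lim: "(\<lambda>n. prob_space.expectation M (L n)) \<longlonglongrightarrow> s"
    and u_mono: "\<And>n. n \<ge> 1 \<Longrightarrow> prob_space.expectation M (U (Suc n)) \<le> prob_space.expectation M (U n)"
    and u_lim: "(\<lambda>n. prob_space.expectation M (U n)) \<longlonglongrightarrow> s"
    and L_super: "\<And>n. n \<ge> 1 \<Longrightarrow> AE x in M.
        real_cond_exp M (tail_F M L U n) (L (n - 1)) x = Lstar M L U n x \<and> Lstar M L U n x \<le> L n x"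
    and U_sub: "\<And>n. n \<ge> 1 \<Longrightarrow> AE x in M.
        real_cond_exp M (tail_F M L U n) (U (n - 1)) x = Ustar M L U n x \<and> Ustar M L U n x \<ge> U n x"
    and gap: "\<And>n. n \<ge> 1 \<Longrightarrow> AE x in M. Ustar M L U n x > Lstar M L U n x"
    and G_meas: "G \<in> borel_measurable M"
    and G_unif: "distr M borel G = uniform_measure lborel {0..1}"
    and G_indep: "prob_space.indep_set M {G -` A \<inter> space M | A. A \<in> sets (borel :: real measure)}
        (sets (tail_F M L U 1))"
  shows "(AE x in M. stopN M L U G x < \<infinity>)
    \<and> measure M {x \<in> space M. coinC M L U G x = 1} = s
    \<and> (\<forall>n\<ge>1. measure M {x \<in> space M. stopN M L U G x > enat n}
          = prob_space.expectation M (U n) - prob_space.expectation M (L n))"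
proof -
  interpret reverse_martingale_bounds M L U G
    using assms(1) L_meas U_meas L0 U0 bounds L_super U_sub gap G_meas G_unif G_indep
    by (intro reverse_martingale_bounds.intro reverse_martingale_bounds_axioms.intro)
  have "(\<lambda>n. expectation (U n) - expectation (L n)) \<longlonglongrightarrow> 0"
    using tendsto_diff[OF u_lim l_lim] by simp
  then show ?thesis
    using AE_stopN_finite prob_coinC_eq_1[OF l_lim] prob_stopN_gt by blast
qed

end
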